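(* Let $q$ be a prime power, let $X^2+\mu X+\lambda$ be a primitive polynomial of degree $2$ over $\mathbb F_q$, and let $x=\begin{pmatrix}0&1\\-\lambda&-\mu\end{pmatrix}\in GL_2(q)$, with image $\bar x\in PGL_2(q)$; set $C=\langle \bar x\rangle$ (a Singer cycle) and let $S\le PGL_2(q)$ be the image of the group of invertible upper triangular matrices $\begin{pmatrix}a&b\\0&c\end{pmatrix}$ ($a,c\in\mathbb F_q^*$, $b\in\mathbb F_q$). Consider the right action of $S$ on $C$ given by $s:c\mapsto c^{[s]}$, where $cs=s'c^{[s]}$ with $s'\in S$, $c^{[s]}\in C$. Let $u_1,\dots,u_q$ be the elements of the image $U\le S$ in $PGL_2(q)$ of the matrices $\begin{pmatrix}d&t\\0&d\end{pmatrix}$ ($d\in\mathbb F_q^*$, $t\in\mathbb F_q$). Then $\bar x^{[u_1]},\dots,\bar x^{[u_q]}$ are distinct. In particular the action of $S$ on $C\setminus\{1\}$ is transitive.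
   Context: $PGL_2(q)=CS$ with $C\cap S=1$, so every element $cs$ with $c\in C$, $s\in S$ can be uniquely written as $s'c'$ with $s'\in S$, $c'\in C$, and $c^{[s]}:=c'$ defines a right action of $S$ on $C$. *)

theory Defs
  imports "HOL-Algebra.Algebra" "HOL-Computational_Algebra.Polynomial"
begin

text \<open>2x2 matrices over a field: (a,b,c,d) stands for the matrix with rows (a b) and (c d).\<close>
type_synonym 'a mat2 = "'a \<times> 'a \<times> 'a \<times> 'a"

fun mmul :: "'a::field mat2 \<Rightarrow> 'a mat2 \<Rightarrow> 'a mat2" where
  "mmul (a1,b1,c1,d1) (a2,b2,c2,d2) = (a1 * a2 + b1 * c2, a1 * b2 + b1 * d2, c1 * a2 + d1 * c2, c1 * b2 + d1 * d2)"

fun det2 :: "'a::field mat2 \<Rightarrow> 'a" where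
  "det2 (a1,b1,c1,d1) = a1 * d1 - b1 * c1"

definition GL2 :: "('a::field) mat2 monoid" where
  "GL2 = \<lparr>carrier = {M. det2 M \<noteq> 0}, monoid.mult = mmul, monoid.one = (1,0,0,1)\<rparr>"

definition scalars :: "('a::field) mat2 set" where
  "scalars = {(k,0,0,k) | k. k \<noteq> 0}"

definition PGL2 :: "('a::field) mat2 set monoid" where
  "PGL2 = GL2 Mod scalars"

definition pgl_img :: "('a::field) mat2 \<Rightarrow> 'a mat2 set" where
  "pgl_img M = scalars #>\<^bsub>GL2\<^esub> M"

definition borel :: "('a::field) mat2 set set" where
  "borel = pgl_img ` {(a,b,0,c) | a b c. a \<noteq> 0 \<and> c \<noteq> 0}"

definition unip :: "('a::field) mat2 set set" where
  "unip = pgl_img ` {(d,t,0,d) | d t. d \<noteq> 0}"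

definition companion :: "'a::field \<Rightarrow> 'a \<Rightarrow> 'a mat2" where
  "companion lam mu = (0, 1, - lam, - mu)"

definition singer :: "'a::field \<Rightarrow> 'a \<Rightarrow> 'a mat2 set set" where
  "singer lam mu = {pgl_img (companion lam mu) [^]\<^bsub>PGL2\<^esub> (k::nat) | k. True}"

definition twisted_act :: "('a::field) mat2 set set \<Rightarrow> 'a mat2 set set \<Rightarrow> 'a mat2 set \<Rightarrow> 'a mat2 set \<Rightarrow> 'a mat2 set" where
  "twisted_act C S c s = (THE c'. c' \<in> C \<and> (\<exists>s'\<in>S. c \<otimes>\<^bsub>PGL2\<^esub> s = s' \<otimes>\<^bsub>PGL2\<^esub> c'))"

definition poly_order :: "'a::field poly \<Rightarrow> nat" where
  "poly_order f = (LEAST e. 0 < e \<and> f dvd (monom 1 e - 1))"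

text \<open>Primitive polynomial over F_q (Lidl--Niederreiter Thm 3.16 characterisation):
  monic, degree m \<ge> 1, f(0) \<noteq> 0, and order q^m - 1.\<close>
definition primitive_poly :: "'a::{finite,field} poly \<Rightarrow> bool" where
  "primitive_poly f \<longleftrightarrow> degree f \<ge> 1 \<and> lead_coeff f = 1 \<and> coeff f 0 \<noteq> 0
     \<and> poly_order f = card (UNIV :: 'a set) ^ degree f - 1"

end

theory Submission
  imports Defs
begin

text \<open>Primitivity says that x has order q^2 - 1, so the powers of x are exactly the q^2 - 1
  nonzero matrices a I + b x. Their bottom rows (- b lam, a - b mu) run through all nonzero
  rows, and a matrix is an upper triangular multiple of another one as soon as their bottom rows
  are proportional; hence PGL_2(q) = S C, while C \<inter> S = 1 because a power of x with zero lower
  left entry is scalar. So the twisted action is well defined. If x u1 and x u2 have the same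
  C-component then x u1 u2^-1 x^-1 lies in S, and an explicit computation shows that this
  happens for unipotent u1, u2 only when u1 = u2. Transitivity on C - 1 holds because any two
  matrices with nonzero lower left entries are related by G B = A H with A, B upper
  triangular.\<close>

section \<open>Products with a subgroup\<close>

lemma (in group) nat_pow_eq_if_subgroup_mult_eq:
  assumes S: "subgroup S G" and x: "x \<in> carrier G"
    and meet: "\<And>n::nat. x [^] n \<in> S \<Longrightarrow> x [^] n = \<one>"
    and eq: "s1 \<in> S" "s2 \<in> S" "s1 \<otimes> x [^] (i::nat) = s2 \<otimes> x [^] (j::nat)"
  shows "x [^] i = x [^] j"
proof -
  have *: "x [^] i = x [^] j"
    if "i \<le> j" "s1 \<in> S" "s2 \<in> S" "s1 \<otimes> x [^] i = s2 \<otimes> x [^] j" for i j :: nat and s1 s2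
  proof -
    have s: "s1 \<in> carrier G" "s2 \<in> carrier G" using that(2,3) subgroup.mem_carrier[OF S] by auto
    have j: "x [^] j = x [^] (j - i) \<otimes> x [^] i"
      using nat_pow_mult[OF x, of "j - i" i] \<open>i \<le> j\<close> by simp
    have "s1 \<otimes> x [^] i = (s2 \<otimes> x [^] (j - i)) \<otimes> x [^] i"
      using that(4) s x j by (metis m_assoc nat_pow_closed)
    then have "s1 = s2 \<otimes> x [^] (j - i)"
      using s x by (meson m_closed nat_pow_closed right_cancel)
    then have "x [^] (j - i) = inv s2 \<otimes> s1"
      using s x by (simp add: m_assoc[symmetric])
    also have "\<dots> \<in> S" by (intro subgroup.m_closed subgroup.m_inv_closed S that)
    finally have "x [^] (j - i) = \<one>" by (rule meet)
    then show ?thesis using j x by simp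
  qed
  show ?thesis
  proof (cases "i \<le> j")
    case True
    then show ?thesis using *[of i j s1 s2] eq by blast
  next
    case False
    then show ?thesis using *[of j i s2 s1] eq by force
  qed
qed

lemma (in group) conj_quotient_if_same_right_factor:
  assumes "c \<in> carrier G" "d \<in> carrier G" "u1 \<in> carrier G" "u2 \<in> carrier G"
    "s1 \<in> carrier G" "s2 \<in> carrier G"
    and "c \<otimes> u1 = s1 \<otimes> d" "c \<otimes> u2 = s2 \<otimes> d"
  shows "c \<otimes> (u1 \<otimes> inv u2) = (s1 \<otimes> inv s2) \<otimes> c"
proof -
  have d: "d = inv s2 \<otimes> (c \<otimes> u2)" using assms by (simp add: m_assoc[symmetric])
  have "c \<otimes> (u1 \<otimes> inv u2) = (s1 \<otimes> d) \<otimes> inv u2" using assms by (simp add: m_assoc[symmetric])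
  also have "\<dots> = (s1 \<otimes> inv s2 \<otimes> c) \<otimes> (u2 \<otimes> inv u2)" using assms(1-6) by (subst d) (simp add: m_assoc)
  also have "\<dots> = (s1 \<otimes> inv s2) \<otimes> c" using assms by simp
  finally show ?thesis .
qed

section \<open>GL(2) and PGL(2) over a field\<close>

lemma mmul_assoc: "mmul (mmul A B) C = mmul A (mmul B (C::'a::field mat2))"
  by (cases A, cases B, cases C) (simp add: algebra_simps)

lemma det2_mmul: "det2 (mmul A B) = det2 A * det2 (B::'a::field mat2)"
  by (cases A, cases B) (simp add: algebra_simps)

lemma mmul_scalar_commute: "mmul (k,0,0,k) M = mmul M (k,0,0,(k::'a::field))"
  by (cases M) (simp add: algebra_simps)

lemma GL2_simps [simp]:
  "carrier GL2 = {M. det2 M \<noteq> 0}" "monoid.mult GL2 = mmul" "one GL2 = (1,0,0,1)"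
  by (simp_all add: GL2_def)

definition minv :: "'a::field mat2 \<Rightarrow> 'a mat2" where
  "minv M = (case M of (a,b,c,d) \<Rightarrow> (d / det2 M, - b / det2 M, - c / det2 M, a / det2 M))"

lemma mmul_minv_left:
  assumes "det2 M \<noteq> 0" shows "mmul (minv M) M = (1,0,0,(1::'a::field))"
proof -
  obtain a b c d where "M = (a,b,c,d)" by (cases M)
  moreover have "inverse (det2 M) * det2 M = 1" using assms by simp
  ultimately show ?thesis by (simp add: minv_def divide_inverse algebra_simps)
qed

lemma det2_minv: "det2 M \<noteq> 0 \<Longrightarrow> det2 (minv M) \<noteq> (0::'a::field)"
  using det2_mmul[of "minv M" M] by (auto simp: mmul_minv_left)

lemma group_GL2: "group (GL2 :: 'a::field mat2 monoid)"
proof (rule groupI)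
  fix M :: "'a mat2" assume "M \<in> carrier GL2"
  then show "\<exists>N\<in>carrier GL2. N \<otimes>\<^bsub>GL2\<^esub> M = \<one>\<^bsub>GL2\<^esub>"
    by (intro bexI[of _ "minv M"]) (auto simp: mmul_minv_left det2_minv)
qed (auto simp: det2_mmul mmul_assoc)

lemma GL2_inv: "det2 M \<noteq> 0 \<Longrightarrow> inv\<^bsub>GL2\<^esub> M = minv (M::'a::field mat2)"
  by (rule group.inv_equality[OF group_GL2]) (auto simp: mmul_minv_left det2_minv)

lemma subgroup_scalars: "subgroup scalars (GL2 :: 'a::field mat2 monoid)"
proof (rule group.subgroupI[OF group_GL2])
  show "scalars \<subseteq> carrier (GL2::'a mat2 monoid)" "scalars \<noteq> {}"
    by (auto simp: scalars_def intro!: exI[of _ 1])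
next
  fix M :: "'a mat2" assume "M \<in> scalars"
  then show "inv\<^bsub>GL2\<^esub> M \<in> scalars"
    by (auto simp: scalars_def GL2_inv minv_def power2_eq_square[symmetric])
next
  fix M N :: "'a mat2" assume "M \<in> scalars" "N \<in> scalars"
  then show "M \<otimes>\<^bsub>GL2\<^esub> N \<in> scalars" by (auto simp: scalars_def)
qed

lemma normal_scalars: "scalars \<lhd> (GL2 :: 'a::field mat2 monoid)"
  by (rule group.normalI[OF group_GL2 subgroup_scalars])
     (auto simp: l_coset_def r_coset_def scalars_def mmul_scalar_commute)

lemma group_PGL2: "group (PGL2 :: 'a::field mat2 set monoid)"
  unfolding PGL2_def by (rule normal.factorgroup_is_group[OF normal_scalars])

lemma group_hom_pgl_img: "group_hom (GL2 :: 'a::field mat2 monoid) PGL2 pgl_img"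
  unfolding group_hom_def group_hom_axioms_def
  using group_GL2 group_PGL2 normal.r_coset_hom_Mod[OF normal_scalars]
  by (auto simp: PGL2_def pgl_img_def[abs_def])

lemma pgl_img_mult:
  "det2 A \<noteq> 0 \<Longrightarrow> det2 B \<noteq> 0 \<Longrightarrow> pgl_img (mmul A B) = pgl_img A \<otimes>\<^bsub>PGL2\<^esub> pgl_img (B::'a::field mat2)"
  using group_hom.hom_mult[OF group_hom_pgl_img, of A B] by simp

lemma pgl_img_carrier: "det2 A \<noteq> 0 \<Longrightarrow> pgl_img (A::'a::field mat2) \<in> carrier PGL2"
  using group_hom.hom_closed[OF group_hom_pgl_img, of A] by simp

lemma pgl_img_pow: "det2 A \<noteq> 0 \<Longrightarrow> pgl_img A [^]\<^bsub>PGL2\<^esub> (k::nat) = pgl_img (A [^]\<^bsub>GL2\<^esub> k)"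
  using group_hom.hom_nat_pow[OF group_hom_pgl_img, of A k] by simp

lemma pgl_img_scalar: "k \<noteq> 0 \<Longrightarrow> pgl_img (k,0,0,k::'a::field) = \<one>\<^bsub>PGL2\<^esub>"
  using subgroup.rcos_const[OF subgroup_scalars group_GL2, of "(k,0,0,k)"]
  by (auto simp: PGL2_def pgl_img_def scalars_def)

lemma pgl_img_smult:
  "k \<noteq> 0 \<Longrightarrow> det2 B \<noteq> 0 \<Longrightarrow> pgl_img (mmul (k,0,0,k) B) = pgl_img (B::'a::field mat2)"
  using pgl_img_mult[of "(k,0,0,k)" B] pgl_img_scalar[of k] pgl_img_carrier[of B]
    monoid.l_one[OF group.is_monoid[OF group_PGL2]]
  by simp

lemma pgl_img_eqD:
  assumes "pgl_img A = pgl_img B" "det2 A \<noteq> 0"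
  shows "\<exists>k. k \<noteq> 0 \<and> A = mmul (k,0,0,k) (B::'a::field mat2)"
proof -
  have "A \<in> pgl_img A" unfolding pgl_img_def
    using assms(2) group.rcos_self[OF group_GL2 _ subgroup_scalars] by simp
  then show ?thesis using assms(1) by (auto simp: pgl_img_def r_coset_def scalars_def)
qed

section \<open>The Borel subgroup\<close>

fun lower_left :: "'a mat2 \<Rightarrow> 'a" where
  "lower_left (a,b,c,d) = c"

definition upper_triangular :: "'a::field mat2 set" where
  "upper_triangular = {(a,b,0,c) | a b c. a \<noteq> 0 \<and> c \<noteq> 0}"

lemma borel_eq_image: "borel = pgl_img ` upper_triangular"
  by (simp add: borel_def upper_triangular_def)

lemma upper_triangular_iff: "M \<in> upper_triangular \<longleftrightarrow> det2 M \<noteq> 0 \<and> lower_left M = 0"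
  by (cases M) (auto simp: upper_triangular_def)

lemma subgroup_upper_triangular: "subgroup upper_triangular (GL2 :: 'a::field mat2 monoid)"
proof (rule group.subgroupI[OF group_GL2])
  show "upper_triangular \<subseteq> carrier (GL2::'a mat2 monoid)"
    by (auto simp: upper_triangular_iff)
  show "(upper_triangular :: 'a mat2 set) \<noteq> {}"
    by (auto simp: upper_triangular_def intro!: exI[of _ 1])
next
  fix M :: "'a mat2" assume "M \<in> upper_triangular"
  then show "inv\<^bsub>GL2\<^esub> M \<in> upper_triangular"
    by (cases M) (auto simp: upper_triangular_iff GL2_inv det2_minv minv_def)
next
  fix M N :: "'a mat2" assume "M \<in> upper_triangular" "N \<in> upper_triangular"
  then show "M \<otimes>\<^bsub>GL2\<^esub> N \<in> upper_triangular" by (auto simp: upper_triangular_def)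
qed

lemma subgroup_borel: "subgroup borel (PGL2 :: 'a::field mat2 set monoid)"
  unfolding borel_eq_image
  by (rule group_hom.subgroup_img_is_subgroup[OF group_hom_pgl_img subgroup_upper_triangular])

lemma borel_carrier: "s \<in> borel \<Longrightarrow> s \<in> carrier (PGL2 :: 'a::field mat2 set monoid)"
  using subgroup.subset[OF subgroup_borel] by blast

text \<open>The lower left entry of P M^-1 is (p3 m4 - p4 m3) / det M.\<close>

lemma pgl_img_in_borel_coset:
  fixes p1 p2 p3 p4 m1 m2 m3 m4 :: "'a::field"
  assumes P: "det2 (p1,p2,p3,p4) \<noteq> 0" and M: "det2 (m1,m2,m3,m4) \<noteq> 0"
    and proportional: "p3 * m4 = p4 * m3"
  shows "\<exists>s\<in>borel. pgl_img (p1,p2,p3,p4) = s \<otimes>\<^bsub>PGL2\<^esub> pgl_img (m1,m2,m3,m4)"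
proof -
  define A where "A = mmul (p1,p2,p3,p4) (minv (m1,m2,m3,m4))"
  have A_M: "mmul A (m1,m2,m3,m4) = (p1,p2,p3,p4)"
    unfolding A_def mmul_assoc mmul_minv_left[OF M] by simp
  have "det2 A \<noteq> 0" unfolding A_def det2_mmul using P det2_minv[OF M] by simp
  moreover have "lower_left A = 0"
    using proportional M by (simp add: A_def minv_def field_simps)
  ultimately have "A \<in> upper_triangular" by (simp add: upper_triangular_iff)
  then show ?thesis
    using pgl_img_mult[of A "(m1,m2,m3,m4)"] A_M M by (auto simp: borel_eq_image upper_triangular_iff)
qed

lemma borel_double_coset:
  fixes G H :: "'a::field mat2"
  assumes "det2 G \<noteq> 0" "lower_left G \<noteq> 0" "det2 H \<noteq> 0" "lower_left H \<noteq> 0"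
  shows "\<exists>s\<in>borel. \<exists>s'\<in>borel. pgl_img G \<otimes>\<^bsub>PGL2\<^esub> s' = s \<otimes>\<^bsub>PGL2\<^esub> pgl_img H"
proof -
  obtain g1 g2 g3 g4 where G: "G = (g1,g2,g3,g4)" by (cases G)
  obtain h1 h2 h3 h4 where H: "H = (h1,h2,h3,h4)" by (cases H)
  define \<beta> where "\<beta> = (g3*h4 - g4*h3) / (g3*h3)"
  define B :: "'a mat2" where "B = (1, \<beta>, 0, 1)"
  have B: "B \<in> upper_triangular" by (simp add: B_def upper_triangular_def)
  have GB: "mmul G B = (g1, g1*\<beta> + g2, g3, g3*\<beta> + g4)" by (simp add: G B_def)
  have "det2 (mmul G B) \<noteq> 0" using assms(1) by (simp add: det2_mmul B_def)
  moreover have "g3 * h4 = (g3*\<beta> + g4) * h3" using assms G H by (simp add: \<beta>_def field_simps)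
  ultimately obtain s where "s \<in> borel" "pgl_img (mmul G B) = s \<otimes>\<^bsub>PGL2\<^esub> pgl_img H"
    using pgl_img_in_borel_coset[of g1 "g1*\<beta> + g2" g3 "g3*\<beta> + g4" h1 h2 h3 h4] assms(3)
    unfolding GB H by blast
  moreover have "pgl_img B \<in> borel" using B by (simp add: borel_eq_image)
  ultimately show ?thesis
    using pgl_img_mult[of G B] assms(1) B by (auto simp: upper_triangular_iff)
qed

section \<open>The unipotent subgroup\<close>

definition unipotent :: "'a::field \<Rightarrow> 'a mat2" where
  "unipotent t = (1, t, 0, 1)"

lemma det2_unipotent [simp]: "det2 (unipotent t) = 1"
  by (simp add: unipotent_def)

lemma unip_eq_range: "unip = range (\<lambda>t. pgl_img (unipotent t :: 'a::field mat2))"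
proof
  show "unip \<subseteq> range (\<lambda>t. pgl_img (unipotent t :: 'a mat2))"
  proof
    fix u assume "u \<in> (unip :: 'a mat2 set set)"
    then obtain d t where "d \<noteq> 0" "u = pgl_img (d,t,0,d)" by (auto simp: unip_def)
    moreover have "(d,t,0,d) = mmul (d,0,0,d) (unipotent (t/d))"
      using \<open>d \<noteq> 0\<close> by (simp add: unipotent_def)
    ultimately show "u \<in> range (\<lambda>t. pgl_img (unipotent t))"
      using pgl_img_smult[of d "unipotent (t/d)"] by auto
  qed
  show "range (\<lambda>t. pgl_img (unipotent t :: 'a mat2)) \<subseteq> unip"
    by (auto simp: unip_def unipotent_def)
qed

lemma inj_pgl_img_unipotent: "inj (\<lambda>t. pgl_img (unipotent t :: 'a::field mat2))"
proof (rule injI)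
  fix t t' :: 'a assume eq: "pgl_img (unipotent t) = pgl_img (unipotent t')"
  obtain k where "unipotent t = mmul (k,0,0,k) (unipotent t')"
    using pgl_img_eqD[OF eq] by auto
  then show "t = t'" by (simp add: unipotent_def)
qed

lemma card_unip: "card (unip :: 'a::{finite,field} mat2 set set) = card (UNIV :: 'a set)"
  unfolding unip_eq_range using card_image[OF inj_pgl_img_unipotent] by simp

lemma pgl_img_unipotent_diff:
  "pgl_img (unipotent s) \<otimes>\<^bsub>PGL2\<^esub> inv\<^bsub>PGL2\<^esub> pgl_img (unipotent t) = pgl_img (unipotent (s - t) :: 'a::field mat2)"
proof -
  have "pgl_img (unipotent s) = pgl_img (unipotent (s - t)) \<otimes>\<^bsub>PGL2\<^esub> pgl_img (unipotent t :: 'a mat2)"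
    using pgl_img_mult[of "unipotent (s - t)" "unipotent t"] by (simp add: unipotent_def)
  then show ?thesis
    using group.inv_solve_right'[OF group_PGL2] pgl_img_carrier det2_unipotent
    by (metis one_neq_zero)
qed

section \<open>Powers of the companion matrix\<close>

text \<open>The matrix a I + b x, for x the companion matrix of X^2 + mu X + lam.\<close>

definition companion_lincomb :: "'a::field \<Rightarrow> 'a \<Rightarrow> 'a \<Rightarrow> 'a \<Rightarrow> 'a mat2" where
  "companion_lincomb lam mu a b = (a, b, - b * lam, a - b * mu)"

lemma det2_companion [simp]: "det2 (companion lam mu) = lam"
  by (simp add: companion_def)

lemma mod_quadratic_mult_X:
  fixes r :: "'a::field poly"
  assumes "degree r \<le> 1"
  shows "(r * [:0,1:]) mod [:lam,mu,1:] = [:- coeff r 1 * lam, coeff r 0 - coeff r 1 * mu:]"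
proof -
  have r: "r = [:coeff r 0, coeff r 1:]"
    by (rule poly_eqI) (use assms in \<open>auto simp: coeff_pCons coeff_eq_0 split: nat.splits\<close>)
  have "r * [:0,1:] = [:- coeff r 1 * lam, coeff r 0 - coeff r 1 * mu:] + [:coeff r 1:] * [:lam,mu,1:]"
    by (subst r) (simp add: algebra_simps)
  then have "(r * [:0,1:]) mod [:lam,mu,1:] = [:- coeff r 1 * lam, coeff r 0 - coeff r 1 * mu:] mod [:lam,mu,1:]"
    by (simp only: mod_mult_self1)
  also have "\<dots> = [:- coeff r 1 * lam, coeff r 0 - coeff r 1 * mu:]"
    by (rule mod_poly_less) auto
  finally show ?thesis .
qed

text \<open>Cayley--Hamilton in coordinates: x^e = a I + b x, where a + b X is the remainder of X^e
  modulo X^2 + mu X + lam.\<close>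

lemma companion_pow:
  fixes lam mu :: "'a::field"
  defines "r e \<equiv> monom 1 e mod [:lam,mu,1:]"
  shows "companion lam mu [^]\<^bsub>GL2\<^esub> e = companion_lincomb lam mu (coeff (r e) 0) (coeff (r e) 1)"
proof (induction e)
  case 0
  have "r 0 = 1" by (simp add: r_def one_pCons mod_poly_less)
  then show ?case by (simp add: companion_lincomb_def one_pCons)
next
  case (Suc e)
  have deg: "degree (r e) \<le> 1"
    using degree_mod_less[of "[:lam,mu,1:]" "monom 1 e"] by (auto simp: r_def)
  have "monom (1::'a) (Suc e) = monom 1 e * [:0,1:]" by (simp add: monom_altdef power_Suc2)
  then have "r (Suc e) = (r e * [:0,1:]) mod [:lam,mu,1:]"
    unfolding r_def by (metis mod_mult_left_eq)
  also have "\<dots> = [:- coeff (r e) 1 * lam, coeff (r e) 0 - coeff (r e) 1 * mu:]"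
    by (rule mod_quadratic_mult_X[OF deg])
  finally show ?case unfolding nat_pow_Suc Suc
    by (simp add: companion_lincomb_def companion_def algebra_simps)
qed

lemma companion_pow_eq_one_iff:
  fixes lam mu :: "'a::field"
  shows "companion lam mu [^]\<^bsub>GL2\<^esub> e = (1,0,0,1) \<longleftrightarrow> [:lam,mu,1:] dvd monom 1 e - 1"
proof -
  let ?r = "monom 1 e mod [:lam,mu,1:]"
  have deg: "degree ?r \<le> 1"
    using degree_mod_less[of "[:lam,mu,1:]" "monom 1 e"] by auto
  have "companion lam mu [^]\<^bsub>GL2\<^esub> e = (1,0,0,1) \<longleftrightarrow> coeff ?r 0 = 1 \<and> coeff ?r 1 = 0"
    unfolding companion_pow by (auto simp: companion_lincomb_def)
  also have "\<dots> \<longleftrightarrow> ?r = 1"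
  proof
    assume low: "coeff ?r 0 = 1 \<and> coeff ?r 1 = 0"
    show "?r = 1"
    proof (rule poly_eqI)
      fix n :: nat
      consider "n = 0" | "n = 1" | "n > 1" by linarith
      then show "coeff ?r n = coeff 1 n"
        by cases (use low deg in \<open>simp_all add: coeff_eq_0\<close>)
    qed
  qed simp
  also have "\<dots> \<longleftrightarrow> [:lam,mu,1:] dvd monom 1 e - 1"
  proof -
    have "(1::'a poly) mod [:lam,mu,1:] = 1" by (rule mod_poly_less) simp
    then show ?thesis using mod_eq_dvd_iff[of "monom 1 e" "[:lam,mu,1:]" 1] by (simp only:)
  qed
  finally show ?thesis .
qed

lemma companion_pow_det:
  "lam \<noteq> 0 \<Longrightarrow> det2 (companion lam mu [^]\<^bsub>GL2\<^esub> (e::nat)) \<noteq> (0::'a::field)"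
  using monoid.nat_pow_closed[OF group.is_monoid[OF group_GL2], of "companion lam mu" e] by simp

lemma companion_pow_eq_lincomb:
  fixes lam mu :: "'a::field" and e :: nat
  assumes "lam \<noteq> 0"
  obtains a b where "(a, b) \<noteq> (0, 0)" "companion lam mu [^]\<^bsub>GL2\<^esub> e = companion_lincomb lam mu a b"
proof (rule that)
  let ?r = "monom 1 e mod [:lam,mu,1:]"
  show pow: "companion lam mu [^]\<^bsub>GL2\<^esub> e = companion_lincomb lam mu (coeff ?r 0) (coeff ?r 1)"
    by (rule companion_pow)
  have "det2 (companion_lincomb lam mu 0 0) = 0" by (simp add: companion_lincomb_def)
  then show "(coeff ?r 0, coeff ?r 1) \<noteq> (0, 0)"
    using companion_pow_det[OF assms, of mu e] pow by auto
qed

lemma pgl_img_companion_pow_eq_one: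
  fixes lam mu :: "'a::field" and e :: nat
  assumes "lam \<noteq> 0" "lower_left (companion lam mu [^]\<^bsub>GL2\<^esub> e) = 0"
  shows "pgl_img (companion lam mu [^]\<^bsub>GL2\<^esub> e) = \<one>\<^bsub>PGL2\<^esub>"
proof -
  obtain a b where ab: "(a, b) \<noteq> (0, 0)" and e: "companion lam mu [^]\<^bsub>GL2\<^esub> e = companion_lincomb lam mu a b"
    using companion_pow_eq_lincomb[OF assms(1)] .
  have "b = 0" using assms e by (simp add: companion_lincomb_def)
  then show ?thesis using ab e pgl_img_scalar[of a] by (simp add: companion_lincomb_def)
qed

lemma companion_conj_unipotent:
  fixes lam mu d :: "'a::field"
  assumes "lam \<noteq> 0" "M \<in> upper_triangular"
    and eq: "pgl_img (mmul (companion lam mu) (unipotent d)) = pgl_img (mmul M (companion lam mu))"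
  shows "d = 0"
proof -
  obtain k where k: "mmul (companion lam mu) (unipotent d) = mmul (k,0,0,k) (mmul M (companion lam mu))"
    using pgl_img_eqD[OF eq] assms(1) by (auto simp: det2_mmul)
  obtain m1 m2 m4 where "M = (m1,m2,0,m4)" using assms(2) by (auto simp: upper_triangular_def)
  with k have "- lam = k * m4 * - lam" "- (lam * d) - mu = k * m4 * - mu"
    by (simp_all add: companion_def unipotent_def algebra_simps)
  then show ?thesis using assms(1) by auto
qed

section \<open>The Singer cycle and the twisted action\<close>

lemma carrier_PGL2: "carrier (PGL2 :: 'a::field mat2 set monoid) = pgl_img ` carrier GL2"
  by (auto simp: PGL2_def FactGroup_def RCOSETS_def pgl_img_def)

locale primitive_quadratic =
  fixes lam mu :: "'a::{finite,field}"
  assumes primitive: "primitive_poly [:lam, mu, 1:]"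
begin

abbreviation x :: "'a mat2" where "x \<equiv> companion lam mu"
abbreviation xbar :: "'a mat2 set" where "xbar \<equiv> pgl_img x"

lemma lam_nonzero: "lam \<noteq> 0"
  using primitive by (simp add: primitive_poly_def)

lemma x_carrier: "x \<in> carrier GL2"
  using lam_nonzero by simp

lemma ord_companion: "group.ord GL2 x = card (UNIV :: 'a set) ^ 2 - 1"
proof -
  interpret GL: group "GL2 :: 'a mat2 monoid" by (rule group_GL2)
  let ?f = "[:lam, mu, 1:]"
  have fin: "finite (carrier (GL2 :: 'a mat2 monoid))" by simp
  have dvd_iff: "?f dvd monom 1 n - 1 \<longleftrightarrow> GL.ord x dvd n" for n
    using GL.pow_eq_id[OF x_carrier, of n] by (simp add: companion_pow_eq_one_iff)
  have "GL.ord x > 0" using GL.ord_ge_1[OF fin x_carrier] by simp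
  then have "0 < poly_order ?f \<and> ?f dvd monom 1 (poly_order ?f) - 1" "poly_order ?f \<le> GL.ord x"
    unfolding poly_order_def using dvd_iff[of "GL.ord x"]
    by (auto intro: LeastI2_wellorder[of "\<lambda>e. 0 < e \<and> ?f dvd monom 1 e - 1"] Least_le)
  then have "poly_order ?f = GL.ord x"
    using dvd_iff by (auto dest: dvd_imp_le)
  then show ?thesis using primitive by (simp add: primitive_poly_def power2_eq_square)
qed

lemma companion_pow_surj:
  assumes "(a, b) \<noteq> (0, 0)"
  obtains k :: nat where "x [^]\<^bsub>GL2\<^esub> k = companion_lincomb lam mu a b"
proof -
  interpret GL: group "GL2 :: 'a mat2 monoid" by (rule group_GL2)
  let ?powers = "(\<lambda>k. x [^]\<^bsub>GL2\<^esub> k) ` {0 .. GL.ord x - 1}"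
  let ?lincombs = "(\<lambda>(a, b). companion_lincomb lam mu a b) ` (UNIV - {(0, 0)})"
  have "x [^]\<^bsub>GL2\<^esub> k \<in> ?lincombs" for k :: nat
  proof -
    obtain a b where "(a, b) \<noteq> (0, 0)" "x [^]\<^bsub>GL2\<^esub> k = companion_lincomb lam mu a b"
      using companion_pow_eq_lincomb[OF lam_nonzero] .
    then show ?thesis by (auto intro: image_eqI[of _ _ "(a, b)"])
  qed
  then have sub: "?powers \<subseteq> ?lincombs" by blast
  have "card ?powers = GL.ord x"
    using card_image[OF GL.ord_inj[OF x_carrier]] GL.ord_ge_1[OF _ x_carrier] by simp
  also have "\<dots> = card (UNIV - {(0::'a, 0::'a)})"
    using card_cartesian_product[of "UNIV :: 'a set" "UNIV :: 'a set"]
    by (simp add: ord_companion card_Diff_singleton power2_eq_square)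
  also have "\<dots> \<ge> card ?lincombs" by (rule card_image_le) simp
  finally have "?powers = ?lincombs" using sub by (intro card_seteq) auto
  moreover have "companion_lincomb lam mu a b \<in> ?lincombs" using assms by force
  ultimately have "companion_lincomb lam mu a b \<in> ?powers" by simp
  then obtain k :: nat where "companion_lincomb lam mu a b = x [^]\<^bsub>GL2\<^esub> k" by (rule imageE)
  then show ?thesis by (rule that[OF sym])
qed

lemma xbar_carrier: "xbar \<in> carrier PGL2"
  using pgl_img_carrier[of x] lam_nonzero by simp

lemma xbar_pow: "xbar [^]\<^bsub>PGL2\<^esub> (k::nat) = pgl_img (x [^]\<^bsub>GL2\<^esub> k)"
  using pgl_img_pow[of x] lam_nonzero by simp

lemma singer_carrier: "singer lam mu \<subseteq> carrier PGL2"
  using monoid.nat_pow_closed[OF group.is_monoid[OF group_PGL2] xbar_carrier]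
  by (auto simp: singer_def)

lemma xbar_pow_in_borel:
  assumes "xbar [^]\<^bsub>PGL2\<^esub> (k::nat) \<in> borel"
  shows "xbar [^]\<^bsub>PGL2\<^esub> k = \<one>\<^bsub>PGL2\<^esub>"
proof -
  obtain M where M: "M \<in> upper_triangular" "pgl_img (x [^]\<^bsub>GL2\<^esub> k) = pgl_img M"
    using assms by (auto simp: xbar_pow borel_eq_image)
  obtain c where "x [^]\<^bsub>GL2\<^esub> k = mmul (c,0,0,c) M"
    using pgl_img_eqD[OF M(2) companion_pow_det[OF lam_nonzero]] by auto
  then have "lower_left (x [^]\<^bsub>GL2\<^esub> k) = 0"
    using M(1) by (cases M) (auto simp: upper_triangular_iff)
  then show ?thesis unfolding xbar_pow by (rule pgl_img_companion_pow_eq_one[OF lam_nonzero])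
qed

lemma singer_borel_unique:
  assumes "c1 \<in> singer lam mu" "c2 \<in> singer lam mu" "s1 \<in> borel" "s2 \<in> borel"
    and "s1 \<otimes>\<^bsub>PGL2\<^esub> c1 = s2 \<otimes>\<^bsub>PGL2\<^esub> c2"
  shows "c1 = c2"
proof -
  obtain i j :: nat where "c1 = xbar [^]\<^bsub>PGL2\<^esub> i" "c2 = xbar [^]\<^bsub>PGL2\<^esub> j"
    using assms(1,2) by (auto simp: singer_def)
  then show ?thesis
    using assms(3-5) group.nat_pow_eq_if_subgroup_mult_eq[OF group_PGL2 subgroup_borel xbar_carrier
        xbar_pow_in_borel]
    by blast
qed

lemma twisted_act_eqI:
  assumes "c' \<in> singer lam mu" "s' \<in> borel" "c \<otimes>\<^bsub>PGL2\<^esub> s = s' \<otimes>\<^bsub>PGL2\<^esub> c'"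
  shows "twisted_act (singer lam mu) borel c s = c'"
  unfolding twisted_act_def
proof (rule the_equality)
  fix c'' assume "c'' \<in> singer lam mu \<and> (\<exists>s''\<in>borel. c \<otimes>\<^bsub>PGL2\<^esub> s = s'' \<otimes>\<^bsub>PGL2\<^esub> c'')"
  then show "c'' = c'" using assms singer_borel_unique by metis
qed (use assms in blast)

lemma borel_singer_factorization:
  assumes "g \<in> carrier PGL2"
  obtains s k where "s \<in> borel" "g = s \<otimes>\<^bsub>PGL2\<^esub> xbar [^]\<^bsub>PGL2\<^esub> (k::nat)"
proof -
  obtain m1 m2 m3 m4 where M: "det2 (m1,m2,m3,m4) \<noteq> 0" "g = pgl_img (m1,m2,m3,m4)"
    using assms by (auto simp: carrier_PGL2)
  define b where "b = - m3 / lam"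
  define a where "a = m4 + b * mu"
  have "(a, b) \<noteq> (0, 0)" using M(1) lam_nonzero by (auto simp: a_def b_def)
  then obtain k :: nat where "x [^]\<^bsub>GL2\<^esub> k = companion_lincomb lam mu a b"
    by (rule companion_pow_surj)
  then have k: "x [^]\<^bsub>GL2\<^esub> k = (a, b, m3, m4)"
    using lam_nonzero by (simp add: companion_lincomb_def a_def b_def)
  obtain s where "s \<in> borel" "g = s \<otimes>\<^bsub>PGL2\<^esub> pgl_img (x [^]\<^bsub>GL2\<^esub> k)"
    using pgl_img_in_borel_coset[of m1 m2 m3 m4 a b m3 m4] M companion_pow_det[OF lam_nonzero, of mu k]
    unfolding k by auto
  then show ?thesis using that by (simp add: xbar_pow)
qed

lemma twisted_act_factorization:
  assumes "c \<in> carrier PGL2" "s \<in> carrier PGL2"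
  shows "twisted_act (singer lam mu) borel c s \<in> singer lam mu"
    and "\<exists>s'\<in>borel. c \<otimes>\<^bsub>PGL2\<^esub> s = s' \<otimes>\<^bsub>PGL2\<^esub> twisted_act (singer lam mu) borel c s"
proof -
  have "c \<otimes>\<^bsub>PGL2\<^esub> s \<in> carrier PGL2"
    using assms by (rule monoid.m_closed[OF group.is_monoid[OF group_PGL2]])
  then obtain s' k where s': "s' \<in> borel" "c \<otimes>\<^bsub>PGL2\<^esub> s = s' \<otimes>\<^bsub>PGL2\<^esub> xbar [^]\<^bsub>PGL2\<^esub> (k::nat)"
    by (rule borel_singer_factorization)
  have "xbar [^]\<^bsub>PGL2\<^esub> k \<in> singer lam mu" by (auto simp: singer_def)
  then have "twisted_act (singer lam mu) borel c s = xbar [^]\<^bsub>PGL2\<^esub> k"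
    using s' by (rule twisted_act_eqI)
  then show "twisted_act (singer lam mu) borel c s \<in> singer lam mu"
    and "\<exists>s'\<in>borel. c \<otimes>\<^bsub>PGL2\<^esub> s = s' \<otimes>\<^bsub>PGL2\<^esub> twisted_act (singer lam mu) borel c s"
    using s' \<open>xbar [^]\<^bsub>PGL2\<^esub> k \<in> singer lam mu\<close> by auto
qed

lemma inj_on_twisted_act_unip: "inj_on (\<lambda>u. twisted_act (singer lam mu) borel xbar u) unip"
proof (rule inj_onI)
  interpret P: group "PGL2 :: 'a mat2 set monoid" by (rule group_PGL2)
  fix u1 u2 assume u: "u1 \<in> unip" "u2 \<in> unip"
    and eq: "twisted_act (singer lam mu) borel xbar u1 = twisted_act (singer lam mu) borel xbar u2"
  obtain t1 t2 where t: "u1 = pgl_img (unipotent t1)" "u2 = pgl_img (unipotent t2)"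
    using u by (auto simp: unip_eq_range)
  have uc: "u1 \<in> carrier PGL2" "u2 \<in> carrier PGL2"
    using t pgl_img_carrier[OF det2_unipotent[THEN ssubst, of "\<lambda>d. d \<noteq> 0"]] by auto
  define c where "c = twisted_act (singer lam mu) borel xbar u2"
  have c: "c \<in> carrier PGL2"
    using twisted_act_factorization(1)[OF xbar_carrier uc(2)] singer_carrier by (auto simp: c_def)
  obtain s1 s2 where s: "s1 \<in> borel" "s2 \<in> borel"
    "xbar \<otimes>\<^bsub>PGL2\<^esub> u1 = s1 \<otimes>\<^bsub>PGL2\<^esub> c" "xbar \<otimes>\<^bsub>PGL2\<^esub> u2 = s2 \<otimes>\<^bsub>PGL2\<^esub> c"
    using twisted_act_factorization(2)[OF xbar_carrier uc(1)]
      twisted_act_factorization(2)[OF xbar_carrier uc(2)] eq by (auto simp: c_def)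
  have "s1 \<otimes>\<^bsub>PGL2\<^esub> inv\<^bsub>PGL2\<^esub> s2 \<in> borel"
    using s subgroup_borel by (intro subgroup.m_closed subgroup.m_inv_closed)
  then obtain M where M: "M \<in> upper_triangular" "s1 \<otimes>\<^bsub>PGL2\<^esub> inv\<^bsub>PGL2\<^esub> s2 = pgl_img M"
    by (auto simp: borel_eq_image)
  have "u1 \<otimes>\<^bsub>PGL2\<^esub> inv\<^bsub>PGL2\<^esub> u2 = pgl_img (unipotent (t1 - t2))"
    unfolding t by (rule pgl_img_unipotent_diff)
  moreover have "xbar \<otimes>\<^bsub>PGL2\<^esub> (u1 \<otimes>\<^bsub>PGL2\<^esub> inv\<^bsub>PGL2\<^esub> u2) = (s1 \<otimes>\<^bsub>PGL2\<^esub> inv\<^bsub>PGL2\<^esub> s2) \<otimes>\<^bsub>PGL2\<^esub> xbar"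
    using P.conj_quotient_if_same_right_factor[OF xbar_carrier c uc
        borel_carrier[OF s(1)] borel_carrier[OF s(2)] s(3,4)] .
  ultimately have "xbar \<otimes>\<^bsub>PGL2\<^esub> pgl_img (unipotent (t1 - t2)) = pgl_img M \<otimes>\<^bsub>PGL2\<^esub> xbar"
    unfolding M(2) by simp
  then have "pgl_img (mmul x (unipotent (t1 - t2))) = pgl_img (mmul M x)"
    using pgl_img_mult[of x "unipotent (t1 - t2)"] pgl_img_mult[of M x] lam_nonzero M(1)
    by (simp add: upper_triangular_iff)
  then have "t1 - t2 = 0"
    using companion_conj_unipotent[OF lam_nonzero M(1)] by blast
  then show "u1 = u2" using t by simp
qed

lemma twisted_act_transitive:
  assumes "c1 \<in> singer lam mu - {\<one>\<^bsub>PGL2\<^esub>}" "c2 \<in> singer lam mu - {\<one>\<^bsub>PGL2\<^esub>}"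
  shows "\<exists>s\<in>borel. twisted_act (singer lam mu) borel c1 s = c2"
proof -
  obtain i j :: nat where c: "c1 = pgl_img (x [^]\<^bsub>GL2\<^esub> i)" "c2 = pgl_img (x [^]\<^bsub>GL2\<^esub> j)"
    using assms by (auto simp: singer_def xbar_pow)
  have "lower_left (x [^]\<^bsub>GL2\<^esub> i) \<noteq> 0" "lower_left (x [^]\<^bsub>GL2\<^esub> j) \<noteq> 0"
    using assms c pgl_img_companion_pow_eq_one[OF lam_nonzero] by auto
  then obtain s s' where "s \<in> borel" "s' \<in> borel" "c1 \<otimes>\<^bsub>PGL2\<^esub> s' = s \<otimes>\<^bsub>PGL2\<^esub> c2"
    using borel_double_coset companion_pow_det[OF lam_nonzero] c by metis
  then show ?thesis using twisted_act_eqI assms by blast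
qed

end

theorem mainTheorem3:
  fixes lam mu :: "'a::{finite,field}"
  assumes "primitive_poly [:lam, mu, 1:]"
  shows "card (unip :: 'a mat2 set set) = card (UNIV :: 'a set)
    \<and> inj_on (\<lambda>u. twisted_act (singer lam mu) borel (pgl_img (companion lam mu)) u) unip
    \<and> (\<forall>c1 \<in> singer lam mu - {\<one>\<^bsub>PGL2\<^esub>}. \<forall>c2 \<in> singer lam mu - {\<one>\<^bsub>PGL2\<^esub>}.
         \<exists>s \<in> borel. twisted_act (singer lam mu) borel c1 s = c2)"
proof -
  interpret primitive_quadratic lam mu by unfold_locales (rule assms)
  show ?thesis using card_unip inj_on_twisted_act_unip twisted_act_transitive by blast
qed

end
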